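(* Let $e,f,g$ be the three edges at a vertex $v$, with $g$ the designated minimal edge at $v$ (so $e$ and $f$ are linked). Fix $\lambda(g)$ and the values of $\lambda$ on all edges other than $e,f$. Then $$\int\frac{d\lambda(e)\,d\lambda(f)}{\lambda(e)\lambda(f)}<2,$$ where the integral is over the set of $(\lambda(e),\lambda(f))\in(0,\infty)^2$ for which the resulting point lies in $\Delta_L$.
   Context: $\Gamma$ is a finite trivalent graph with edge set $E$. A linking choice $L$ assigns to each vertex one of its three edges, the designated minimal edge. $\Delta_L$ is the set of $\lambda\in(0,\infty)^E$ such that, at every vertex with edges $a,b,c$: - the triangle inequalities $\lambda(a)\le\lambda(b)+\lambda(c)$, $\lambda(b)\le\lambda(a)+\lambda(c)$, $\lambda(c)\le\lambda(a)+\lambda(b)$ hold, and - the designated minimal edge has $\lambda$-value at most those of the other two. *)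

theory Defs
  imports "HOL-Analysis.Analysis"
begin

text \<open>A finite trivalent graph (loops and multiple edges allowed): finite vertex set V,
finite edge set E, and for each vertex v the triple inc v of its three edge-ends.\<close>

definition edges_at :: "('v \<Rightarrow> 'e \<times> 'e \<times> 'e) \<Rightarrow> 'v \<Rightarrow> 'e set" where
  "edges_at inc v = (case inc v of (a, b, c) \<Rightarrow> {a, b, c})"

definition ends_count :: "'v set \<Rightarrow> ('v \<Rightarrow> 'e \<times> 'e \<times> 'e) \<Rightarrow> 'e \<Rightarrow> nat" where
  "ends_count V inc x = (\<Sum>v\<in>V. case inc v of (a, b, c) \<Rightarrow>
      (if a = x then 1 else 0) + (if b = x then 1 else 0) + (if c = x then 1 else 0))"

definition trivalent_graph :: "'v set \<Rightarrow> 'e set \<Rightarrow> ('v \<Rightarrow> 'e \<times> 'e \<times> 'e) \<Rightarrow> bool" where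
  "trivalent_graph V E inc \<longleftrightarrow> finite V \<and> finite E \<and>
     (\<forall>v\<in>V. edges_at inc v \<subseteq> E) \<and> (\<forall>x\<in>E. ends_count V inc x = 2)"

definition linking_choice :: "'v set \<Rightarrow> ('v \<Rightarrow> 'e \<times> 'e \<times> 'e) \<Rightarrow> ('v \<Rightarrow> 'e) \<Rightarrow> bool" where
  "linking_choice V inc L \<longleftrightarrow> (\<forall>v\<in>V. L v \<in> edges_at inc v)"

text \<open>Delta_L: positive functions on E satisfying the triangle inequalities at each vertex
and the minimality of the designated edge. Values outside E are irrelevant.\<close>
definition Delta :: "'v set \<Rightarrow> 'e set \<Rightarrow> ('v \<Rightarrow> 'e \<times> 'e \<times> 'e) \<Rightarrow> ('v \<Rightarrow> 'e)
                     \<Rightarrow> ('e \<Rightarrow> real) set" where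
  "Delta V E inc L = {lam. (\<forall>x\<in>E. lam x > 0) \<and>
     (\<forall>v\<in>V. case inc v of (a, b, c) \<Rightarrow>
        lam a \<le> lam b + lam c \<and> lam b \<le> lam a + lam c \<and> lam c \<le> lam a + lam b \<and>
        (\<forall>x\<in>edges_at inc v. lam (L v) \<le> lam x))}"

end

theory Submission
  imports Defs "HOL-Real_Asymp.Real_Asymp"
begin

text \<open>With c = \<lambda>(g), the conditions of Delta_L at v confine (\<lambda>(e), \<lambda>(f)) to the strip
  c \<le> x, c \<le> y, |x - y| \<le> c. Integrating 1/(xy) over it in y first leaves
  (ln (x + c) - ln (max c (x - c)))/x, which is at most ln 2/c for x \<le> 2c and at most
  c/x^2 + 1/(x - c) - 1/x for x \<ge> 2c. The two pieces integrate to ln 2 and 1/2 + ln 2,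
  and 2 ln 2 + 1/2 < 2 because ln 2 < 3/4.\<close>

definition linked_strip :: "real \<Rightarrow> (real \<times> real) set" where
  "linked_strip c = {(x, y). c \<le> x \<and> c \<le> y \<and> x \<le> y + c \<and> y \<le> x + c}"

lemma Delta_linked_vertex:
  assumes "v \<in> V" "edges_at inc v = {e, f, g}" "e \<noteq> f" "e \<noteq> g" "f \<noteq> g" "L v = g"
    and "g \<in> E" "lam \<in> Delta V E inc L"
  shows "0 < lam g" "(lam e, lam f) \<in> linked_strip (lam g)"
proof -
  obtain a b d where abd: "inc v = (a, b, d)" by (cases "inc v") auto
  have perm: "{a, b, d} = {e, f, g}" using assms(2) abd by (simp add: edges_at_def)
  from assms(8) have pos: "\<forall>x\<in>E. lam x > 0"
    and tri: "lam a \<le> lam b + lam d" "lam b \<le> lam a + lam d" "lam d \<le> lam a + lam b"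
    and min: "\<forall>x\<in>edges_at inc v. lam (L v) \<le> lam x"
    using assms(1) abd unfolding Delta_def by (fastforce split: prod.splits)+
  show "0 < lam g" using pos assms(7) by blast
  have "a \<in> {e, f, g}" "b \<in> {e, f, g}" "d \<in> {e, f, g}"
    "e \<in> {a, b, d}" "f \<in> {a, b, d}" "g \<in> {a, b, d}"
    using perm by blast+
  then have "lam e \<le> lam f + lam g" "lam f \<le> lam e + lam g"
    using tri assms(3-5) by auto
  moreover have "lam g \<le> lam e" "lam g \<le> lam f" using min assms(2,6) by auto
  ultimately show "(lam e, lam f) \<in> linked_strip (lam g)"
    unfolding linked_strip_def by simp
qed

lemma ln_2_less_three_quarters: "ln (2::real) < 3/4"
proof -
  have "1 + 3/4 + (3/4)\<^sup>2/2 \<le> exp (3/4::real)" by (rule exp_lower_Taylor_quadratic) simp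
  then have "2 < exp (3/4::real)" by (simp add: power2_eq_square)
  then show ?thesis by (metis exp_gt_zero ln_exp ln_less_cancel_iff zero_less_numeral)
qed

lemma ln_2_ge_half: "ln (2::real) \<ge> 1/2"
proof -
  have "ln (1/2::real) \<le> 1/2 - 1" by (rule ln_le_minus_one) simp
  then show ?thesis by (simp add: ln_div)
qed

lemma ln_one_plus_le_mult_ln_2:
  fixes t :: real
  assumes "1 \<le> t"
  shows "ln (1 + t) \<le> t * ln 2"
proof -
  have "ln ((1 + t)/2) \<le> (1 + t)/2 - 1" by (rule ln_le_minus_one) (use assms in simp)
  then have "ln (1 + t) \<le> ln 2 + (t - 1) * (1/2)" using assms by (simp add: ln_div field_simps)
  also have "\<dots> \<le> ln 2 + (t - 1) * ln 2"
    using assms ln_2_ge_half by (intro add_left_mono mult_left_mono) auto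
  finally show ?thesis by (simp add: algebra_simps)
qed

lemma ln_quotient_le:
  fixes a b :: real
  assumes "0 < a" "0 < b"
  shows "ln a - ln b \<le> (a - b)/b"
proof -
  have "ln (a/b) \<le> a/b - 1" by (rule ln_le_minus_one) (use assms in simp)
  then show ?thesis using assms by (simp add: ln_div diff_divide_distrib)
qed

lemma nn_integral_inverse_mult_Icc:
  fixes a b x :: real
  assumes "0 < a" "a \<le> b" "0 < x"
  shows "(\<integral>\<^sup>+y. ennreal (1/(x*y)) * indicator {a..b} y \<partial>lborel) = ennreal ((ln b - ln a)/x)"
proof -
  have "((\<lambda>y. 1/(x*y)) has_integral (ln b / x - ln a / x)) {a..b}"
  proof (rule fundamental_theorem_of_calculus[OF assms(2)])
    fix y assume "y \<in> {a..b}"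
    then have "y > 0" using assms by auto
    then show "((\<lambda>y. ln y / x) has_vector_derivative 1/(x*y)) (at y within {a..b})"
      unfolding has_real_derivative_iff_has_vector_derivative[symmetric]
      using assms(3) by (auto intro!: derivative_eq_intros simp: field_simps)
  qed
  then have "(\<integral>\<^sup>+y. ennreal (1/(x*y)) * indicator {a..b} y \<partial>lborel) = ennreal (ln b / x - ln a / x)"
    by (intro nn_integral_has_integral_lebesgue') (use assms in auto)
  then show ?thesis by (simp add: diff_divide_distrib)
qed

lemma nn_integral_slice_majorant_tail:
  fixes c :: real
  assumes "0 < c"
  shows "(\<integral>\<^sup>+x. ennreal (c/x\<^sup>2 + 1/(x-c) - 1/x) * indicator {2*c..} x \<partial>lborel) = ennreal (1/2 + ln 2)"
proof -
  have "(\<integral>\<^sup>+x. ennreal (c/x\<^sup>2 + 1/(x-c) - 1/x) * indicator {2*c..} x \<partial>lborel)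
     = ennreal (0 - (- c/(2*c) + ln (2*c-c) - ln (2*c)))"
  proof (rule nn_integral_FTC_atLeast[where F="\<lambda>x. - c/x + ln (x-c) - ln x"])
    show "(\<lambda>x. c/x\<^sup>2 + 1/(x-c) - 1/x) \<in> borel_measurable borel" by measurable
    fix x assume "2*c \<le> x"
    then have x: "x > c" "x > 0" using assms by auto
    then show "((\<lambda>x. - c/x + ln (x-c) - ln x) has_real_derivative c/x\<^sup>2 + 1/(x-c) - 1/x) (at x)"
      by (auto intro!: derivative_eq_intros simp: field_simps power2_eq_square)
    have "1/(x-c) - 1/x \<ge> 0" using x assms by (simp add: field_simps)
    moreover have "c/x\<^sup>2 \<ge> 0" using assms by simp
    ultimately show "0 \<le> c/x\<^sup>2 + 1/(x-c) - 1/x" by linarith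
  next
    show "((\<lambda>x. - c/x + ln (x-c) - ln x) \<longlongrightarrow> 0) at_top" using assms by real_asymp
  qed
  also have "0 - (- c/(2*c) + ln (2*c-c) - ln (2*c)) = 1/2 + ln 2"
    using assms by (simp add: ln_mult)
  finally show ?thesis .
qed

lemma nn_integral_linked_strip_slice_le:
  fixes c x :: real
  assumes "0 < c"
  shows "(\<integral>\<^sup>+y. indicator (linked_strip c) (x, y) * ennreal (1/(x*y)) \<partial>lborel)
    \<le> ennreal (ln 2 / c) * indicator {c..2*c} x + ennreal (c/x\<^sup>2 + 1/(x-c) - 1/x) * indicator {2*c..} x"
proof (cases "c \<le> x")
  case False
  then have "\<And>y. indicator (linked_strip c) (x, y) = (0::ennreal)"
    unfolding linked_strip_def by (auto simp: indicator_def)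
  then show ?thesis by simp
next
  case True
  have "\<And>y. indicator (linked_strip c) (x, y) * ennreal (1/(x*y))
      = ennreal (1/(x*y)) * indicator {max c (x-c)..x+c} y"
    using True unfolding linked_strip_def by (auto simp: indicator_def)
  then have slice: "(\<integral>\<^sup>+y. indicator (linked_strip c) (x, y) * ennreal (1/(x*y)) \<partial>lborel)
      = ennreal ((ln (x+c) - ln (max c (x-c)))/x)"
    using nn_integral_inverse_mult_Icc[of "max c (x-c)" "x+c" x] True assms by simp
  show ?thesis
  proof (cases "x \<le> 2*c")
    case near: True
    have "ln (x+c) - ln c = ln (1 + x/c)" using assms True by (simp add: ln_div field_simps)
    also have "\<dots> \<le> x/c * ln 2" using True assms by (intro ln_one_plus_le_mult_ln_2) simp
    finally have "(ln (x+c) - ln c)/x \<le> ln 2 / c"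
      using True assms by (simp add: field_simps)
    then show ?thesis using slice True near by (simp add: ennreal_leI add_increasing2)
  next
    case far: False
    have "ln (x+c) - ln (x-c) = (ln (x+c) - ln x) + (ln x - ln (x-c))" by simp
    also have "\<dots> \<le> c/x + c/(x-c)"
      using ln_quotient_le[of "x+c" x] ln_quotient_le[of x "x-c"] far assms by simp
    finally have "(ln (x+c) - ln (x-c))/x \<le> (c/x + c/(x-c))/x"
      using far assms by (simp add: divide_right_mono)
    also have "\<dots> = c/x\<^sup>2 + 1/(x-c) - 1/x"
      using far assms by (simp add: field_simps power2_eq_square)
    finally show ?thesis using slice True far by (simp add: ennreal_leI add_increasing)
  qed
qed

lemma nn_integral_linked_strip_less_2:
  fixes c :: real
  assumes "0 < c"
  shows "(\<integral>\<^sup>+p. indicator (linked_strip c) p * ennreal (1/(fst p * snd p)) \<partial>lborel) < 2"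
proof -
  have meas: "(\<lambda>p. indicator (linked_strip c) p * ennreal (1/(fst p * snd p)))
      \<in> borel_measurable (lborel \<Otimes>\<^sub>M lborel)"
    unfolding linked_strip_def by (simp add: case_prod_beta') measurable
  have "(\<integral>\<^sup>+p. indicator (linked_strip c) p * ennreal (1/(fst p * snd p)) \<partial>lborel)
      = (\<integral>\<^sup>+x. \<integral>\<^sup>+y. indicator (linked_strip c) (x, y) * ennreal (1/(x*y)) \<partial>lborel \<partial>lborel)"
    using lborel.nn_integral_fst[OF meas] by (simp add: lborel_prod)
  also have "\<dots> \<le> (\<integral>\<^sup>+x. ennreal (ln 2 / c) * indicator {c..2*c} x
                     + ennreal (c/x\<^sup>2 + 1/(x-c) - 1/x) * indicator {2*c..} x \<partial>lborel)"
    using nn_integral_linked_strip_slice_le[OF assms] by (intro nn_integral_mono)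
  also have "\<dots> = (\<integral>\<^sup>+x. ennreal (ln 2 / c) * indicator {c..2*c} x \<partial>lborel)
                  + (\<integral>\<^sup>+x. ennreal (c/x\<^sup>2 + 1/(x-c) - 1/x) * indicator {2*c..} x \<partial>lborel)"
    by (rule nn_integral_add) measurable
  also have "\<dots> = ennreal (ln 2 + (1/2 + ln 2))"
    using nn_integral_slice_majorant_tail[OF assms] assms ln_2_ge_half
    by (simp add: nn_integral_cmult_indicator ennreal_mult[symmetric] ennreal_plus[symmetric])
  also have "\<dots> < ennreal 2"
    using ln_2_less_three_quarters by (intro ennreal_lessI) auto
  finally show ?thesis by simp
qed

theorem mainTheorem9:
  fixes V :: "'v set" and E :: "'e set" and inc :: "'v \<Rightarrow> 'e \<times> 'e \<times> 'e"
    and L :: "'v \<Rightarrow> 'e" and v :: 'v and e f g :: 'e and lam0 :: "'e \<Rightarrow> real"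
  assumes "trivalent_graph V E inc"
    and "linking_choice V inc L"
    and "v \<in> V"
    and "edges_at inc v = {e, f, g}"
    and "e \<noteq> f" and "e \<noteq> g" and "f \<noteq> g"
    and "L v = g"
  shows "(\<integral>\<^sup>+ p. indicator {(x, y). x > 0 \<and> y > 0 \<and> lam0(e := x, f := y) \<in> Delta V E inc L} p
            * ennreal (1 / (fst p * snd p)) \<partial>(lborel :: (real \<times> real) measure)) < 2"
proof -
  let ?S = "{(x, y). x > 0 \<and> y > 0 \<and> lam0(e := x, f := y) \<in> Delta V E inc L}"
  have "g \<in> E" using assms(1,3,4) unfolding trivalent_graph_def by blast
  have vertex: "0 < lam0 g \<and> (x, y) \<in> linked_strip (lam0 g)" if "(x, y) \<in> ?S" for x y
    using Delta_linked_vertex[of v V inc e f g L E "lam0(e := x, f := y)"] that assms(3-8) \<open>g \<in> E\<close>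
    by auto
  then have S_strip: "?S \<subseteq> linked_strip (lam0 g)" by auto
  show ?thesis
  proof (cases "?S = {}")
    case True
    show ?thesis unfolding True by simp
  next
    case False
    have "(\<integral>\<^sup>+ p. indicator ?S p * ennreal (1 / (fst p * snd p)) \<partial>lborel)
        \<le> (\<integral>\<^sup>+ p. indicator (linked_strip (lam0 g)) p * ennreal (1 / (fst p * snd p)) \<partial>lborel)"
      using S_strip by (intro nn_integral_mono mult_right_mono) (auto simp: indicator_def)
    also have "\<dots> < 2" using nn_integral_linked_strip_less_2 vertex False by blast
    finally show ?thesis .
  qed
qed

end
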